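(* Let $n,r,c$ be integers such that $r\geq 3$, $c\geq 1$, and $n\geq r(r-1)\big((r-1)(r-2)+1\big)c$. If $(r^2-r)$ divides $n$ and an affine plane of order $r$ exists, then there exists a graph $G$ on $n$ vertices with $\delta(G) = \left(1-\frac{r-2}{r^2-r}\right)n-c-1$ such that $\mathrm{mc}_r(G)\leq \frac{n}{r-1}-c$.
   Context: An affine plane of order $q$ is a $q$-uniform hypergraph on $q^2$ vertices (points) with $q(q+1)$ edges (lines) such that each pair of distinct points lies in exactly one line. $\delta(G)$ denotes the minimum degree of $G$. For a graph $G$ and a positive integer $r$, $\mathrm{mc}_r(G)$ is the largest integer $m$ such that in every coloring of the edges of $G$ with $r$ colors there is a monochromatic component (a maximal connected subgraph all of whose edges have one color) with at least $m$ vertices. *)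

theory Defs
  imports Complex_Main
begin

definition affine_plane :: "nat \<Rightarrow> 'a set \<Rightarrow> 'a set set \<Rightarrow> bool" where
  "affine_plane q P L \<longleftrightarrow> finite P \<and> card P = q^2 \<and> finite L \<and> card L = q * (q + 1) \<and>
     (\<forall>l\<in>L. l \<subseteq> P \<and> card l = q) \<and>
     (\<forall>x\<in>P. \<forall>y\<in>P. x \<noteq> y \<longrightarrow> (\<exists>!l. l \<in> L \<and> x \<in> l \<and> y \<in> l))"

definition simple_graph :: "'a set \<Rightarrow> 'a set set \<Rightarrow> bool" where
  "simple_graph V E \<longleftrightarrow> finite V \<and> (\<forall>e\<in>E. e \<subseteq> V \<and> card e = 2)"

definition degree :: "'a set set \<Rightarrow> 'a \<Rightarrow> nat" where
  "degree E v = card {e \<in> E. v \<in> e}"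

definition min_degree :: "'a set \<Rightarrow> 'a set set \<Rightarrow> nat" where
  "min_degree V E = Min (degree E ` V)"

definition edge_coloring :: "nat \<Rightarrow> 'a set set \<Rightarrow> ('a set \<Rightarrow> nat) \<Rightarrow> bool" where
  "edge_coloring r E col \<longleftrightarrow> (\<forall>e\<in>E. col e < r)"

definition mono_adj :: "'a set set \<Rightarrow> ('a set \<Rightarrow> nat) \<Rightarrow> nat \<Rightarrow> 'a \<Rightarrow> 'a \<Rightarrow> bool" where
  "mono_adj E col i u v \<longleftrightarrow> {u, v} \<in> E \<and> col {u, v} = i"

definition mono_component :: "'a set \<Rightarrow> 'a set set \<Rightarrow> ('a set \<Rightarrow> nat) \<Rightarrow> nat \<Rightarrow> 'a \<Rightarrow> 'a set" where
  "mono_component V E col i v = {u \<in> V. (mono_adj E col i)\<^sup>*\<^sup>* v u}"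

definition mc :: "nat \<Rightarrow> 'a set \<Rightarrow> 'a set set \<Rightarrow> nat" where
  "mc r V E = (GREATEST m. \<forall>col. edge_coloring r E col \<longrightarrow>
      (\<exists>i<r. \<exists>v\<in>V. card (mono_component V E col i v) \<ge> m))"

end

theory Submission
  imports Defs "HOL-Library.Nat_Bijection"
begin

text \<open>Take an affine plane of order \<open>r\<close> and single out the parallel class of a line \<open>D\<close>.
  Replace every point \<open>p\<close> by \<open>weight p\<close> vertices and join two vertices unless they lie over
  distinct points of a common line of that class. Colouring an edge between distinct points by the
  parallel class of the line through them uses only the \<open>r\<close> other classes, so every
  monochromatic component lies over a single line not parallel to \<open>D\<close>. With \<open>n = r(r - 1)k\<close>,
  the weights are chosen so that every line parallel to \<open>D\<close> has total weight \<open>(r - 1)k\<close>,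
  which makes the minimum degree \<open>n - 1 - (r - 2)k - c\<close> (attained over a point of weight
  \<open>k - c\<close>), while every other line has weight at most \<open>rk - c = n/(r - 1) - c\<close>.\<close>

section \<open>Affine planes\<close>

definition parallel :: "'a set \<Rightarrow> 'a set \<Rightarrow> bool" where
  "parallel l m \<longleftrightarrow> l = m \<or> l \<inter> m = {}"

lemma parallel_refl [simp]: "parallel l l"
  by (simp add: parallel_def)

lemma parallel_sym: "parallel l m \<Longrightarrow> parallel m l"
  by (auto simp: parallel_def)

definition line_through :: "'a set set \<Rightarrow> 'a \<Rightarrow> 'a \<Rightarrow> 'a set" where
  "line_through L x y = (THE l. l \<in> L \<and> x \<in> l \<and> y \<in> l)"

definition parallel_through :: "'a set set \<Rightarrow> 'a set \<Rightarrow> 'a \<Rightarrow> 'a set" where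
  "parallel_through L m p = (THE l. l \<in> L \<and> p \<in> l \<and> parallel l m)"

locale finite_affine_plane =
  fixes q :: nat and P :: "'a set" and L :: "'a set set"
  assumes affine_plane: "affine_plane q P L" and order_ge_2: "q \<ge> 2"
begin

lemma finite_points: "finite P" and card_points: "card P = q^2" and finite_lines: "finite L"
  and line_subset: "l \<in> L \<Longrightarrow> l \<subseteq> P" and card_line: "l \<in> L \<Longrightarrow> card l = q"
  and ex1_line: "x \<in> P \<Longrightarrow> y \<in> P \<Longrightarrow> x \<noteq> y \<Longrightarrow> \<exists>!l. l \<in> L \<and> x \<in> l \<and> y \<in> l"
  using affine_plane unfolding affine_plane_def by auto

lemma finite_line: "l \<in> L \<Longrightarrow> finite l"
  using finite_points line_subset finite_subset by blast

lemma line_eqI: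
  "\<lbrakk>l \<in> L; m \<in> L; x \<in> l; y \<in> l; x \<in> m; y \<in> m; x \<noteq> y\<rbrakk> \<Longrightarrow> l = m"
  using ex1_line line_subset by blast

lemma card_inter_line_le_1:
  assumes "l \<in> L" "m \<in> L" "l \<noteq> m" "S \<subseteq> l"
  shows "card (S \<inter> m) \<le> 1"
proof -
  have "finite (S \<inter> m)"
    using finite_line[OF assms(2)] by simp
  moreover have "\<forall>x\<in>S \<inter> m. \<forall>x'\<in>S \<inter> m. x = x'"
    using line_eqI[OF assms(1,2)] assms(3,4) by blast
  ultimately show ?thesis
    by (simp add: card_le_Suc0_iff_eq)
qed

lemma line_through:
  assumes "x \<in> P" "y \<in> P" "x \<noteq> y"
  shows "line_through L x y \<in> L" "x \<in> line_through L x y" "y \<in> line_through L x y"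
  unfolding line_through_def using theI'[OF ex1_line[OF assms]] by blast+

lemma line_through_eq: "\<lbrakk>l \<in> L; x \<in> l; y \<in> l; x \<noteq> y\<rbrakk> \<Longrightarrow> line_through L x y = l"
  unfolding line_through_def using line_subset
  by (intro the1_equality[OF ex1_line]) (auto simp: subset_iff)

lemma card_lines_through_point:
  assumes p: "p \<in> P"
  shows "card {l \<in> L. p \<in> l} = q + 1"
proof -
  let ?Lp = "{l \<in> L. p \<in> l}"
  have cover: "P - {p} = (\<Union>l\<in>?Lp. l - {p})"
    using line_through[OF p] line_subset by blast
  have "(q + 1) * (q - 1) = card (P - {p})"
    using p finite_points card_points order_ge_2 by (simp add: power2_eq_square algebra_simps)
  also have "\<dots> = (\<Sum>l\<in>?Lp. card (l - {p}))"
    unfolding cover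
  proof (rule card_UN_disjoint)
    show "\<forall>i\<in>?Lp. \<forall>j\<in>?Lp. i \<noteq> j \<longrightarrow> (i - {p}) \<inter> (j - {p}) = {}"
      using line_eqI by blast
  qed (use finite_lines finite_line in auto)
  also have "\<dots> = card ?Lp * (q - 1)"
    by (simp add: card_line finite_line)
  finally have "(q + 1) * (q - 1) = card ?Lp * (q - 1)" .
  moreover have "q - 1 \<noteq> 0"
    using order_ge_2 by simp
  ultimately show ?thesis
    by (metis mult_right_cancel)
qed

lemma playfair:
  assumes l: "l \<in> L" and p: "p \<in> P" and "p \<notin> l"
  shows "\<exists>!m. m \<in> L \<and> p \<in> m \<and> m \<inter> l = {}"
proof -
  let ?Lp = "{m \<in> L. p \<in> m}"
  let ?meeting = "{m \<in> ?Lp. m \<inter> l \<noteq> {}}"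
  have "line_through L p x \<in> ?meeting" if "x \<in> l" for x
    using line_through[of p x] that p l \<open>p \<notin> l\<close> line_subset by blast
  then have meeting_eq: "?meeting = line_through L p ` l"
    using line_through_eq \<open>p \<notin> l\<close> by blast
  have "inj_on (line_through L p) l"
  proof
    fix x x' assume x: "x \<in> l" "x' \<in> l" and eq: "line_through L p x = line_through L p x'"
    have "x \<in> P" "x' \<in> P" "x \<noteq> p" "x' \<noteq> p"
      using x \<open>p \<notin> l\<close> line_subset l by auto
    then show "x = x'"
      using line_eqI[of "line_through L p x" l x x'] line_through[of p x] line_through[of p x']
        eq x p l \<open>p \<notin> l\<close> by metis
  qed
  then have "card ?meeting = q"
    using meeting_eq card_image card_line[OF l] by metis
  then have "card (?Lp - ?meeting) = 1"
    using card_lines_through_point[OF p] card_Diff_subset[of ?meeting ?Lp] finite_lines by auto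
  then obtain m where m: "?Lp - ?meeting = {m}"
    using card_1_singletonE by blast
  show ?thesis
  proof
    show "m \<in> L \<and> p \<in> m \<and> m \<inter> l = {}"
      using m by blast
  next
    fix m' assume "m' \<in> L \<and> p \<in> m' \<and> m' \<inter> l = {}"
    then show "m' = m"
      using m by blast
  qed
qed

lemma ex1_parallel_through:
  assumes m: "m \<in> L" and p: "p \<in> P"
  shows "\<exists>!l. l \<in> L \<and> p \<in> l \<and> parallel l m"
proof (cases "p \<in> m")
  case True
  then show ?thesis
    using m by (auto simp: parallel_def)
next
  case False
  then show ?thesis
    using playfair[OF m p] by (auto simp: parallel_def)
qed

lemma parallel_through:
  assumes "m \<in> L" "p \<in> P"
  shows "parallel_through L m p \<in> L" "p \<in> parallel_through L m p"
    and "parallel (parallel_through L m p) m"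
  unfolding parallel_through_def using theI'[OF ex1_parallel_through[OF assms]] by blast+

lemma parallel_through_eq:
  assumes "m \<in> L" "l \<in> L" "p \<in> l" "parallel l m"
  shows "parallel_through L m p = l"
proof -
  have "p \<in> P"
    using assms line_subset by blast
  then show ?thesis
    unfolding parallel_through_def using assms
    by (intro the1_equality[OF ex1_parallel_through]) auto
qed

lemma parallel_through_cong:
  assumes "m \<in> L" "p \<in> P" "x \<in> parallel_through L m p"
  shows "parallel_through L m x = parallel_through L m p"
  using parallel_through_eq[OF assms(1) parallel_through(1)[OF assms(1,2)] assms(3)
      parallel_through(3)[OF assms(1,2)]] .

lemma parallel_trans:
  assumes "l \<in> L" "m \<in> L" "n \<in> L" "parallel l m" "parallel m n"
  shows "parallel l n"
proof (cases "l \<inter> n = {}")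
  case False
  then obtain x where "x \<in> l" "x \<in> n"
    by blast
  then have "parallel_through L m x = l" "parallel_through L m x = n"
    using assms parallel_through_eq parallel_sym by blast+
  then show ?thesis
    by simp
qed (simp add: parallel_def)

lemma parallel_meets:
  assumes "l \<in> L" "m \<in> L" "n \<in> L" "parallel l m" "\<not> parallel n m"
  obtains x where "x \<in> l" "x \<in> n"
proof -
  have "\<not> parallel n l"
    using parallel_trans[of n l m] assms by blast
  then show ?thesis
    using that unfolding parallel_def by blast
qed

lemma sum_over_parallel_class:
  assumes l: "l \<in> L" and m: "m \<in> L" and "\<not> parallel l m"
  shows "(\<Sum>x\<in>P. f x) = (\<Sum>p\<in>l. \<Sum>x\<in>parallel_through L m p. f x)"
proof -
  have lP: "l \<subseteq> P"
    using line_subset l by blast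
  have cover: "P = (\<Union>p\<in>l. parallel_through L m p)"
  proof
    show "P \<subseteq> (\<Union>p\<in>l. parallel_through L m p)"
    proof
      fix x assume x: "x \<in> P"
      obtain p where p: "p \<in> parallel_through L m x" "p \<in> l"
        using parallel_meets[OF parallel_through(1)[OF m x] m l parallel_through(3)[OF m x]] assms
        by blast
      then have "parallel_through L m p = parallel_through L m x"
        using parallel_through_cong[OF m x] by blast
      then show "x \<in> (\<Union>p\<in>l. parallel_through L m p)"
        using parallel_through(2)[OF m x] p(2) by blast
    qed
  qed (use parallel_through(1)[OF m] line_subset lP in blast)
  have disjoint: "parallel_through L m p \<inter> parallel_through L m p' = {}"
    if "p \<in> l" "p' \<in> l" "p \<noteq> p'" for p p'
  proof (rule ccontr)
    assume "parallel_through L m p \<inter> parallel_through L m p' \<noteq> {}"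
    then obtain x where x: "x \<in> parallel_through L m p" "x \<in> parallel_through L m p'"
      by blast
    have "parallel_through L m x = parallel_through L m p" "parallel_through L m x = parallel_through L m p'"
      using parallel_through_cong[OF m] x that lP by auto
    then have "p' \<in> parallel_through L m p"
      using parallel_through(2)[OF m] that lP by auto
    then have "l = parallel_through L m p"
      using line_eqI[OF l parallel_through(1)[OF m]] parallel_through(2)[OF m] that lP by blast
    then show False
      using parallel_through(3)[OF m] that lP \<open>\<not> parallel l m\<close> by auto
  qed
  have "(\<Sum>x\<in>P. f x) = (\<Sum>x\<in>(\<Union>p\<in>l. parallel_through L m p). f x)"
    using cover by simp
  also have "\<dots> = (\<Sum>p\<in>l. \<Sum>x\<in>parallel_through L m p. f x)"
  proof (rule sum.UNION_disjoint)
    show "\<forall>p\<in>l. finite (parallel_through L m p)"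
      using finite_line parallel_through(1)[OF m] lP by blast
  qed (use finite_line[OF l] disjoint in blast)+
  finally show ?thesis .
qed

lemma two_lines_and_three_points:
  assumes "q \<ge> 3"
  obtains z Z D y g where "Z \<in> L" "D \<in> L" "Z \<noteq> D" "z \<in> Z" "z \<in> D" "y \<in> D" "g \<in> D"
    "y \<noteq> z" "g \<noteq> z" "g \<noteq> y"
proof -
  have two_elements: "\<exists>x\<in>A. \<exists>x'\<in>A. x \<noteq> x'" if "finite A" "2 \<le> card A" for A :: "'b set"
    using that card_le_Suc0_iff_eq[of A] by auto
  have "P \<noteq> {}"
    using card_points assms by auto
  then obtain z where z: "z \<in> P"
    by blast
  then have "finite {l \<in> L. z \<in> l}" "2 \<le> card {l \<in> L. z \<in> l}"
    using finite_lines card_lines_through_point assms by auto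
  then obtain Z D where ZD: "Z \<in> L" "D \<in> L" "Z \<noteq> D" "z \<in> Z" "z \<in> D"
    using two_elements by blast
  moreover have "card (D - {z}) = q - 1"
    using card_line[OF ZD(2)] ZD(5) finite_line[OF ZD(2)] by simp
  then have "finite (D - {z})" "2 \<le> card (D - {z})"
    using finite_line[OF ZD(2)] assms by auto
  then obtain y g where "y \<in> D - {z}" "g \<in> D - {z}" "g \<noteq> y"
    using two_elements by metis
  ultimately show ?thesis
    using that by blast
qed

end

section \<open>Graphs and blow-ups\<close>

lemma mc_le_bound:
  assumes "edge_coloring r E col" "0 < r" "V \<noteq> {}"
    and "\<And>i v. i < r \<Longrightarrow> v \<in> V \<Longrightarrow> card (mono_component V E col i v) \<le> M"
  shows "mc r V E \<le> M"
proof -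
  let ?Q = "\<lambda>m. \<forall>col. edge_coloring r E col \<longrightarrow>
      (\<exists>i<r. \<exists>v\<in>V. card (mono_component V E col i v) \<ge> m)"
  have bounded: "m \<le> M" if Qm: "?Q m" for m
  proof -
    obtain i v where "i < r" "v \<in> V" "m \<le> card (mono_component V E col i v)"
      using Qm assms(1) by blast
    then show ?thesis
      using assms(4) order_trans by blast
  qed
  have "?Q 0"
    using assms(2,3) by auto
  then have "?Q (Greatest ?Q)"
    using bounded by (rule GreatestI_nat)
  then show ?thesis
    unfolding mc_def by (rule bounded)
qed

lemma mono_component_subset_level:
  assumes "\<And>a b. {a, b} \<in> E \<Longrightarrow> col {a, b} = i \<Longrightarrow> f a = f b"
  shows "mono_component V E col i v \<subseteq> {u \<in> V. f u = f v}"
proof -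
  have "f u = f v" if "(mono_adj E col i)\<^sup>*\<^sup>* v u" for u
    using that by induction (use assms in \<open>auto simp: mono_adj_def\<close>)
  then show ?thesis
    unfolding mono_component_def by blast
qed

lemma min_degree_eqI:
  assumes "finite V" "v \<in> V" "\<And>u. u \<in> V \<Longrightarrow> degree E v \<le> degree E u"
  shows "min_degree V E = degree E v"
  unfolding min_degree_def using assms by (intro Min_eqI) auto

text \<open>The vertex \<open>prod_encode (p, i)\<close> is the \<open>i\<close>-th copy of the point \<open>p\<close>; encoding the pairs
  keeps the vertices natural numbers.\<close>

definition blow_up :: "(nat \<Rightarrow> nat) \<Rightarrow> nat set \<Rightarrow> nat set" where
  "blow_up w S = prod_encode ` (SIGMA p:S. {..<w p})"

definition base_point :: "nat \<Rightarrow> nat" where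
  "base_point u = fst (prod_decode u)"

lemma card_blow_up: "finite S \<Longrightarrow> card (blow_up w S) = (\<Sum>p\<in>S. w p)"
  unfolding blow_up_def by (simp add: card_image inj_prod_encode)

lemma finite_blow_up: "finite S \<Longrightarrow> finite (blow_up w S)"
  unfolding blow_up_def by simp

lemma base_point_blow_up: "u \<in> blow_up w S \<Longrightarrow> base_point u \<in> S \<and> 0 < w (base_point u)"
  unfolding blow_up_def base_point_def by auto

lemma in_blow_up: "p \<in> S \<Longrightarrow> i < w p \<Longrightarrow> prod_encode (p, i) \<in> blow_up w S"
  unfolding blow_up_def by auto

lemma base_point_prod_encode [simp]: "base_point (prod_encode (p, i)) = p"
  unfolding base_point_def by simp

lemma blow_up_restrict: "{u \<in> blow_up w P. base_point u \<in> S} = blow_up w (P \<inter> S)"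
  unfolding blow_up_def base_point_def by auto

definition blow_up_complement :: "(nat \<Rightarrow> nat) \<Rightarrow> nat set \<Rightarrow> (nat \<Rightarrow> nat \<Rightarrow> bool) \<Rightarrow> nat set set" where
  "blow_up_complement w P R = {{u, v} | u v. u \<in> blow_up w P \<and> v \<in> blow_up w P \<and> u \<noteq> v \<and>
     \<not> R (base_point u) (base_point v)}"

lemma simple_graph_blow_up_complement:
  "finite P \<Longrightarrow> simple_graph (blow_up w P) (blow_up_complement w P R)"
  unfolding simple_graph_def blow_up_complement_def by (auto simp: finite_blow_up)

lemma blow_up_complement_edge:
  assumes "symp R" "{a, b} \<in> blow_up_complement w P R"
  shows "a \<in> blow_up w P" "b \<in> blow_up w P" "a \<noteq> b" "\<not> R (base_point a) (base_point b)"
proof -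
  obtain u v where "{a, b} = {u, v}" "u \<in> blow_up w P" "v \<in> blow_up w P" "u \<noteq> v"
    and uv: "\<not> R (base_point u) (base_point v)"
    using assms(2) unfolding blow_up_complement_def by blast
  moreover have "\<not> R (base_point v) (base_point u)"
    using uv sympD[OF assms(1)] by blast
  ultimately show "a \<in> blow_up w P" "b \<in> blow_up w P" "a \<noteq> b" "\<not> R (base_point a) (base_point b)"
    by (auto simp: doubleton_eq_iff)
qed

lemma degree_blow_up_complement:
  assumes "finite P" "symp R" "irreflp R" and v: "v \<in> blow_up w P"
  shows "degree (blow_up_complement w P R) v + 1 + (\<Sum>p\<in>{p \<in> P. R (base_point v) p}. w p)
    = card (blow_up w P)"
proof -
  let ?V = "blow_up w P"
  let ?nbrs = "{u \<in> ?V. u \<noteq> v \<and> \<not> R (base_point v) (base_point u)}"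
  let ?far = "{u \<in> ?V. R (base_point v) (base_point u)}"
  have "{e \<in> blow_up_complement w P R. v \<in> e} = (\<lambda>u. {v, u}) ` ?nbrs"
  proof
    show "{e \<in> blow_up_complement w P R. v \<in> e} \<subseteq> (\<lambda>u. {v, u}) ` ?nbrs"
    proof
      fix e assume e: "e \<in> {e \<in> blow_up_complement w P R. v \<in> e}"
      then obtain u where "e = {v, u}"
        unfolding blow_up_complement_def by auto
      then show "e \<in> (\<lambda>u. {v, u}) ` ?nbrs"
        using e blow_up_complement_edge[OF assms(2), of v u] by blast
    qed
  qed (use v in \<open>auto simp: blow_up_complement_def\<close>)
  moreover have "inj_on (\<lambda>u. {v, u}) ?nbrs"
    by (rule inj_onI) (auto simp: doubleton_eq_iff)
  ultimately have "degree (blow_up_complement w P R) v = card ?nbrs"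
    unfolding degree_def by (simp add: card_image)
  moreover have "?nbrs = ?V - insert v ?far" "insert v ?far \<subseteq> ?V" "v \<notin> ?far"
    using v irreflpD[OF assms(3)] by auto
  moreover have "card ?far = (\<Sum>p\<in>{p \<in> P. R (base_point v) p}. w p)"
    using blow_up_restrict[of w P "Collect (R (base_point v))"] card_blow_up assms(1)
    by (simp add: Collect_conj_eq Int_commute)
  ultimately show ?thesis
    using card_Diff_subset[of "insert v ?far" ?V] card_mono[of ?V "insert v ?far"]
      finite_blow_up[OF assms(1)] finite_subset by (simp add: card_insert_if)
qed

section \<open>The weighted construction\<close>

locale weighted_construction = finite_affine_plane q P L for q and P :: "nat set" and L +
  fixes Z D :: "nat set" and z y g b c :: nat
  assumes order_ge_3: "q \<ge> 3"
    and Z: "Z \<in> L" and D: "D \<in> L" and Z_neq_D: "Z \<noteq> D" and z_in_Z: "z \<in> Z" and z_in_D: "z \<in> D"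
    and y_in_D: "y \<in> D" and g_in_D: "g \<in> D" and y_neq_z: "y \<noteq> z" and g_neq_z: "g \<noteq> z"
    and g_neq_y: "g \<noteq> y"
    and base_large: "(q - 1) * (q - 2) * c \<le> b" and base_pos: "0 < b"
begin

definition H :: "nat set" where
  "H = parallel_through L Z y"

text \<open>The surplus on \<open>H\<close> and on \<open>D\<close> restores
  the weight of every line parallel to \<open>D\<close> to \<open>(q - 1)(b + c)\<close>, and \<open>base_large\<close> keeps
  every other line, \<open>H\<close> included, at most \<open>q b + (q - 1) c\<close>.\<close>

definition weight :: "nat \<Rightarrow> nat" where
  "weight p = (if p \<in> Z - {z} \<or> p = y then 0
     else if p \<in> H then b + (q - 1) * c
     else if p = g then b + 2 * c
     else if p \<in> D - {z} then b + c
     else b)"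

definition aligned :: "nat \<Rightarrow> nat \<Rightarrow> bool" where
  "aligned p p' \<longleftrightarrow> p \<noteq> p' \<and> (\<exists>l\<in>L. p \<in> l \<and> p' \<in> l \<and> parallel l D)"

definition V :: "nat set" where
  "V = blow_up weight P"

definition E :: "nat set set" where
  "E = blow_up_complement weight P aligned"

lemma z_in_P: "z \<in> P" and y_in_P: "y \<in> P" and g_in_P: "g \<in> P"
  using line_subset[OF D] z_in_D y_in_D g_in_D by auto

lemma D_inter_Z: "D \<inter> Z = {z}"
  using line_eqI[OF D Z] z_in_Z z_in_D Z_neq_D by blast

lemma not_parallel_Z_D: "\<not> parallel Z D"
  using Z_neq_D z_in_Z z_in_D by (auto simp: parallel_def)

lemma H: "H \<in> L" "y \<in> H" "parallel H Z"
  unfolding H_def using parallel_through[OF Z y_in_P] by auto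

lemma H_inter_Z: "H \<inter> Z = {}"
  using H D_inter_Z y_in_D y_neq_z unfolding parallel_def by blast

lemma D_inter_H: "D \<inter> H = {y}"
proof -
  have "D \<noteq> H"
    using H_inter_Z z_in_Z z_in_D by blast
  then show ?thesis
    using line_eqI[OF D H(1)] y_in_D H(2) by blast
qed

lemma not_parallel_H_D: "\<not> parallel H D"
  using D_inter_H H_inter_Z z_in_Z z_in_D unfolding parallel_def by blast

lemma weight_le:
  "weight p \<le> b + (if p \<in> H then (q - 1) * c else 0) + (if p \<in> D - {z} then 2 * c else 0)"
  using g_in_D g_neq_z unfolding weight_def by (simp split: if_split)

lemma weight_pos_ge: "0 < weight p \<Longrightarrow> b \<le> weight p"
  unfolding weight_def by (auto split: if_splits)

lemma sum_weight_le:
  assumes "finite S"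
  shows "sum weight S \<le> card S * b + (q - 1) * c * card (S \<inter> H) + 2 * c * card (S \<inter> (D - {z}))"
proof -
  have count: "(\<Sum>p\<in>S. if p \<in> A then a else 0) = a * card (S \<inter> A)" for A and a :: nat
    using assms by (simp add: sum.inter_restrict[symmetric])
  have "sum weight S \<le> (\<Sum>p\<in>S. b + (if p \<in> H then (q - 1) * c else 0)
      + (if p \<in> D - {z} then 2 * c else 0))"
    using weight_le by (rule sum_mono)
  also have "\<dots> = card S * b + (q - 1) * c * card (S \<inter> H) + 2 * c * card (S \<inter> (D - {z}))"
    by (simp only: sum.distrib count sum_constant of_nat_id mult.commute)
  finally show ?thesis .
qed

lemma order_plus_3:
  obtains s where "q = s + 3"
  using order_ge_3 le_Suc_ex[of 3 q] by (auto simp: add.commute)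

lemma twice_c_le_b: "2 * c \<le> b"
proof -
  obtain s where "q = s + 3"
    by (rule order_plus_3)
  then show ?thesis
    using base_large by (simp add: algebra_simps)
qed

lemma sum_weight_remove_hole:
  assumes "finite S" "x \<in> S" "weight x = 0"
  shows "sum weight S = sum weight (S - {x})"
  using sum.remove[OF assms(1,2), of weight] assms(3) by simp

lemma sum_weight_D: "sum weight D = (q - 1) * (b + c)"
proof -
  let ?rest = "D - {z, y, g}"
  have "weight p = b + c" if "p \<in> ?rest" for p
    using that D_inter_Z D_inter_H unfolding weight_def by auto
  then have "sum weight ?rest = card ?rest * (b + c)"
    by simp
  moreover have "card ?rest = q - 3"
    using card_line[OF D] finite_line[OF D] z_in_D y_in_D g_in_D y_neq_z g_neq_z g_neq_y
    by (simp add: card_Diff_subset)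
  moreover have "weight z = b" "weight y = 0" "weight g = b + 2 * c"
    using H_inter_Z z_in_Z D_inter_Z D_inter_H g_in_D g_neq_z g_neq_y unfolding weight_def by auto
  moreover have "sum weight D = weight z + weight y + weight g + sum weight ?rest"
    using sum.subset_diff[of "{z, y, g}" D weight] finite_line[OF D] z_in_D y_in_D g_in_D
      y_neq_z g_neq_z g_neq_y by simp
  moreover obtain s where "q = s + 3"
    by (rule order_plus_3)
  ultimately show ?thesis
    by (simp add: algebra_simps)
qed

lemma sum_weight_parallel_off_D:
  assumes l: "l \<in> L" and "parallel l D" "l \<noteq> D"
  shows "sum weight l = (q - 1) * (b + c)"
proof -
  have l_D: "l \<inter> D = {}"
    using assms by (simp add: parallel_def)
  obtain a where a: "a \<in> l" "a \<in> Z"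
    using parallel_meets[OF l D Z] assms not_parallel_Z_D by blast
  obtain e where e: "e \<in> l" "e \<in> H"
    using parallel_meets[OF l D H(1)] assms not_parallel_H_D by blast
  have "l \<noteq> Z" "l \<noteq> H"
    using assms not_parallel_Z_D not_parallel_H_D by auto
  then have l_Z: "l \<inter> Z = {a}" and l_H: "l \<inter> H = {e}"
    using line_eqI[OF l Z] line_eqI[OF l H(1)] a e by blast+
  have "a \<noteq> e"
    using a e H_inter_Z by blast
  have "weight p = b" if "p \<in> l - {a, e}" for p
    using that l_D l_Z l_H y_in_D g_in_D unfolding weight_def by auto
  moreover have "card (l - {a, e}) = q - 2"
    using card_line[OF l] finite_line[OF l] a e \<open>a \<noteq> e\<close> by (simp add: card_Diff_subset)
  ultimately have "sum weight (l - {a, e}) = (q - 2) * b"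
    by simp
  moreover have "weight a = 0" "weight e = b + (q - 1) * c"
    using a e l_D z_in_D y_in_D H_inter_Z unfolding weight_def by auto
  moreover have "sum weight l = weight a + weight e + sum weight (l - {a, e})"
    using sum.subset_diff[of "{a, e}" l weight] finite_line[OF l] a e \<open>a \<noteq> e\<close> by simp
  moreover obtain s where "q = s + 3"
    by (rule order_plus_3)
  ultimately show ?thesis
    by (simp add: algebra_simps)
qed

lemma sum_weight_parallel:
  "l \<in> L \<Longrightarrow> parallel l D \<Longrightarrow> sum weight l = (q - 1) * (b + c)"
  using sum_weight_D sum_weight_parallel_off_D by blast

lemma sum_weight_in_line_le:
  assumes l: "l \<in> L" "l \<noteq> H" "l \<noteq> D" and "S \<subseteq> l"
  shows "sum weight S \<le> card S * b + (if S \<inter> H = {} then 0 else (q - 1) * c)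
    + (if S \<inter> (D - {z}) = {} then 0 else 2 * c)"
proof -
  have "finite S"
    using finite_line[OF l(1)] \<open>S \<subseteq> l\<close> finite_subset by blast
  have on_line: "a * card X \<le> (if X = {} then 0 else a)" if "card X \<le> 1" for X and a :: nat
    using that by (auto simp: le_Suc_eq)
  have H_once: "card (S \<inter> H) \<le> 1"
    using card_inter_line_le_1[OF l(1) H(1) l(2) \<open>S \<subseteq> l\<close>] .
  have "S \<inter> (D - {z}) = (S - {z}) \<inter> D"
    by blast
  then have D_once: "card (S \<inter> (D - {z})) \<le> 1"
    using card_inter_line_le_1[OF l(1) D l(3), of "S - {z}"] \<open>S \<subseteq> l\<close> by auto
  show ?thesis
    using sum_weight_le[OF \<open>finite S\<close>] on_line[OF H_once, of "(q - 1) * c"]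
      on_line[OF D_once, of "2 * c"] by (simp add: mult.commute)
qed

lemma sum_weight_H: "sum weight H \<le> q * b + (q - 1) * c"
proof -
  have "weight y = 0"
    by (simp add: weight_def)
  then have "sum weight H = sum weight (H - {y})"
    using sum_weight_remove_hole finite_line[OF H(1)] H(2) by blast
  also have "\<dots> \<le> card (H - {y}) * b + (q - 1) * c * card (H - {y})"
  proof -
    have "H - {y} \<subseteq> P - Z - {y}"
      using line_subset[OF H(1)] H_inter_Z by blast
    then have "weight p \<le> b + (q - 1) * c" if "p \<in> H - {y}" for p
      using that by (auto simp: weight_def)
    then show ?thesis
      using sum_mono[of "H - {y}" weight "\<lambda>_. b + (q - 1) * c"] by (simp add: algebra_simps)
  qed
  also have "card (H - {y}) = q - 1"
    using card_line[OF H(1)] finite_line[OF H(1)] H(2) by simp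
  finally have "sum weight H \<le> (q - 1) * b + (q - 1) * (q - 1) * c"
    by (simp add: algebra_simps)
  moreover obtain s where "q = s + 3"
    by (rule order_plus_3)
  ultimately show ?thesis
    using base_large by (simp add: algebra_simps)
qed

lemma line_hole_cases:
  obtains (hole) x where "x \<in> l" "weight x = 0" | (through_z) "z \<in> l" | (off_Z) "l \<inter> Z = {}"
proof (cases "l \<inter> Z = {}")
  case False
  then obtain x where x: "x \<in> l" "x \<in> Z"
    by blast
  show ?thesis
  proof (cases "x = z")
    case False
    then have "weight x = 0"
      using x by (simp add: weight_def)
    then show ?thesis
      using that(1) x by blast
  qed (use that(2) x in blast)
qed

lemma sum_weight_not_parallel:
  assumes l: "l \<in> L" and not_par: "\<not> parallel l D"
  shows "sum weight l \<le> q * b + (q - 1) * c"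
proof (cases "l = H")
  case True
  then show ?thesis
    using sum_weight_H by simp
next
  case l_H: False
  have l_D: "l \<noteq> D"
    using not_par by auto
  note bound = sum_weight_in_line_le[OF l l_H l_D]
  have card_l: "card l = q"
    using card_line[OF l] .
  show ?thesis
  proof (cases rule: line_hole_cases[of l])
    case (hole x)
    then have "sum weight l = sum weight (l - {x})" "card (l - {x}) = q - 1"
      using sum_weight_remove_hole finite_line[OF l] card_l by auto
    moreover obtain s where "q = s + 3"
      by (rule order_plus_3)
    ultimately show ?thesis
      using bound[of "l - {x}"] twice_c_le_b by (auto simp: algebra_simps split: if_splits)
  next
    case through_z
    then have "l \<inter> (D - {z}) = {}"
      using line_eqI[OF l D] z_in_D l_D by blast
    then show ?thesis
      using bound[of l] card_l by (auto split: if_splits)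
  next
    case off_Z
    then have "parallel l H"
      using parallel_trans[OF l Z H(1)] parallel_sym[OF H(3)] by (simp add: parallel_def)
    then have "l \<inter> H = {}"
      using l_H by (simp add: parallel_def)
    then have "sum weight l \<le> q * b + 2 * c"
      using bound[of l] card_l by (simp split: if_splits)
    moreover have "2 * c \<le> (q - 1) * c"
      using order_ge_3 by (intro mult_le_mono1) linarith
    ultimately show ?thesis
      by linarith
  qed
qed

lemma sum_weight_points: "sum weight P = q * (q - 1) * (b + c)"
proof -
  have "sum weight P = (\<Sum>p\<in>Z. sum weight (parallel_through L D p))"
    using sum_over_parallel_class[OF Z D not_parallel_Z_D] .
  also have "\<dots> = (\<Sum>p\<in>Z. (q - 1) * (b + c))"
    using sum_weight_parallel parallel_through[OF D] line_subset[OF Z] by (intro sum.cong) auto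
  also have "\<dots> = q * (q - 1) * (b + c)"
    using card_line[OF Z] by simp
  finally show ?thesis .
qed

lemma finite_V: "finite V"
  unfolding V_def using finite_blow_up[OF finite_points] .

lemma card_V: "card V = q * (q - 1) * (b + c)"
  unfolding V_def using card_blow_up[OF finite_points] sum_weight_points by simp

lemma aligned_with:
  assumes p: "p \<in> P"
  shows "{p' \<in> P. aligned p p'} = parallel_through L D p - {p}"
proof
  show "{p' \<in> P. aligned p p'} \<subseteq> parallel_through L D p - {p}"
    unfolding aligned_def using parallel_through_eq[OF D] by blast
  show "parallel_through L D p - {p} \<subseteq> {p' \<in> P. aligned p p'}"
    unfolding aligned_def using parallel_through[OF D p] line_subset by blast
qed

lemma degree_E:
  assumes v: "v \<in> V"
  shows "degree E v + 1 + (q - 1) * (b + c) = card V + weight (base_point v)"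
proof -
  let ?p = "base_point v"
  have p: "?p \<in> P"
    using base_point_blow_up v unfolding V_def by blast
  have "sum weight (parallel_through L D ?p - {?p}) + weight ?p = (q - 1) * (b + c)"
    using sum.remove[OF finite_line, of "parallel_through L D ?p" ?p weight]
      parallel_through[OF D p] sum_weight_parallel by simp
  moreover have "symp aligned" "irreflp aligned"
    unfolding aligned_def by (auto intro: sympI irreflpI)
  then have "degree E v + 1 + sum weight {p' \<in> P. aligned ?p p'} = card V"
    using degree_blow_up_complement[OF finite_points _ _ v[unfolded V_def]]
    unfolding V_def E_def by blast
  ultimately show ?thesis
    unfolding aligned_with[OF p] by linarith
qed

lemma min_degree_V: "min_degree V E + 1 + (q - 2) * (b + c) + c = card V"
proof -
  define v0 where "v0 = prod_encode (z, 0)"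
  have "weight z = b"
    using H_inter_Z z_in_Z g_neq_z y_neq_z unfolding weight_def by auto
  then have v0: "v0 \<in> V" "base_point v0 = z"
    unfolding v0_def V_def using in_blow_up[OF z_in_P, of 0 weight] base_pos by simp_all
  then have deg_v0: "degree E v0 + 1 + (q - 1) * (b + c) = card V + b"
    using degree_E[OF v0(1)] \<open>weight z = b\<close> by simp
  have "min_degree V E = degree E v0"
  proof (rule min_degree_eqI[OF finite_V v0(1)])
    fix u assume "u \<in> V"
    have "b \<le> weight (base_point u)"
      using weight_pos_ge base_point_blow_up \<open>u \<in> V\<close> unfolding V_def by blast
    then show "degree E v0 \<le> degree E u"
      using degree_E[OF \<open>u \<in> V\<close>] deg_v0 by linarith
  qed
  moreover obtain s where "q = s + 3"
    by (rule order_plus_3)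
  ultimately show ?thesis
    using deg_v0 by (simp add: algebra_simps)
qed

definition directions :: "nat set set" where
  "directions = {m \<in> L. z \<in> m \<and> m \<noteq> D}"

definition direction_index :: "nat set \<Rightarrow> nat" where
  "direction_index = (SOME h. bij_betw h directions {..<q})"

text \<open>The parallel classes other than that of \<open>D\<close> are indexed by their lines through \<open>z\<close>;
  edges inside a single blown-up point get the arbitrary colour \<open>0\<close>.\<close>

definition colour :: "nat set \<Rightarrow> nat" where
  "colour e = (if card (base_point ` e) = 2
     then direction_index (parallel_through L (THE l. l \<in> L \<and> base_point ` e \<subseteq> l) z) else 0)"

definition class_line :: "nat \<Rightarrow> nat \<Rightarrow> nat set" where
  "class_line i p = parallel_through L (inv_into directions direction_index i) p"

lemma bij_direction_index: "bij_betw direction_index directions {..<q}"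
proof -
  have "directions = {m \<in> L. z \<in> m} - {D}"
    unfolding directions_def by blast
  then have "card directions = q"
    using card_lines_through_point[OF z_in_P] D z_in_D by (simp add: card_Diff_singleton)
  moreover have "finite directions"
    unfolding directions_def using finite_lines by simp
  then obtain h where "bij_betw h directions {0..<card directions}"
    using ex_bij_betw_finite_nat by blast
  ultimately have "bij_betw h directions {..<q}"
    by (simp add: atLeast0LessThan)
  then show ?thesis
    unfolding direction_index_def by (rule someI[where P = "\<lambda>h. bij_betw h directions {..<q}"])
qed

lemma parallel_through_z_direction:
  assumes l: "l \<in> L" and "\<not> parallel l D"
  shows "parallel_through L l z \<in> directions"
proof -
  have "parallel_through L l z \<noteq> D"
  proof
    assume "parallel_through L l z = D"
    then have "parallel D l"
      using parallel_through(3)[OF l z_in_P] by simp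
    then show False
      using parallel_sym assms(2) by blast
  qed
  then show ?thesis
    unfolding directions_def using parallel_through[OF l z_in_P] by blast
qed

lemma colour_edge:
  assumes e: "{u, v} \<in> E" and uv: "base_point u \<noteq> base_point v"
  defines "l \<equiv> line_through L (base_point u) (base_point v)"
  shows "l \<in> L" "base_point u \<in> l" "base_point v \<in> l" "\<not> parallel l D"
    and "colour {u, v} = direction_index (parallel_through L l z)"
proof -
  have "symp aligned"
    unfolding aligned_def by (auto intro: sympI)
  note edge = blow_up_complement_edge[OF this e[unfolded E_def]]
  have P: "base_point u \<in> P" "base_point v \<in> P"
    using edge(1,2) base_point_blow_up by blast+
  show l: "l \<in> L" "base_point u \<in> l" "base_point v \<in> l"
    unfolding l_def using line_through[OF P uv] by auto
  show "\<not> parallel l D"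
    using edge(4) l uv unfolding aligned_def by blast
  have "(THE l'. l' \<in> L \<and> base_point ` {u, v} \<subseteq> l') = l"
  proof (rule the_equality)
    show "l \<in> L \<and> base_point ` {u, v} \<subseteq> l"
      using l by simp
    fix l' assume "l' \<in> L \<and> base_point ` {u, v} \<subseteq> l'"
    then show "l' = l"
      using line_eqI[OF _ l(1) _ _ l(2,3) uv] by simp
  qed
  then show "colour {u, v} = direction_index (parallel_through L l z)"
    unfolding colour_def using uv by simp
qed

lemma edge_coloring_colour: "edge_coloring q E colour"
  unfolding edge_coloring_def
proof
  fix e assume "e \<in> E"
  then obtain u v where e: "e = {u, v}"
    unfolding E_def blow_up_complement_def by blast
  show "colour e < q"
  proof (cases "base_point u = base_point v")
    case True
    then show ?thesis
      using e order_ge_3 by (simp add: colour_def)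
  next
    case False
    note l = colour_edge[OF \<open>e \<in> E\<close>[unfolded e] False]
    have "parallel_through L (line_through L (base_point u) (base_point v)) z \<in> directions"
      using parallel_through_z_direction[OF l(1,4)] .
    then show ?thesis
      using l(5) bij_betwE[OF bij_direction_index] e by auto
  qed
qed

lemma class_line:
  assumes "i < q" "p \<in> P"
  shows "class_line i p \<in> L" "p \<in> class_line i p" "\<not> parallel (class_line i p) D"
proof -
  let ?m = "inv_into directions direction_index i"
  have "?m \<in> directions"
    using bij_betw_inv_into[OF bij_direction_index] assms(1) bij_betwE by blast
  then have m: "?m \<in> L" "z \<in> ?m" "?m \<noteq> D"
    unfolding directions_def by auto
  show K: "class_line i p \<in> L" "p \<in> class_line i p"
    unfolding class_line_def using parallel_through[OF m(1) assms(2)] by auto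
  show "\<not> parallel (class_line i p) D"
  proof
    assume "parallel (class_line i p) D"
    moreover have "parallel ?m (class_line i p)"
      unfolding class_line_def using parallel_sym parallel_through(3)[OF m(1) assms(2)] by blast
    ultimately have "parallel ?m D"
      using parallel_trans[OF m(1) K(1) D] by blast
    then show False
      using m z_in_D by (auto simp: parallel_def)
  qed
qed

lemma class_line_edge:
  assumes e: "{u, v} \<in> E" and "colour {u, v} = i"
  shows "class_line i (base_point u) = class_line i (base_point v)"
proof (cases "base_point u = base_point v")
  case False
  note l = colour_edge[OF e False]
  let ?l = "line_through L (base_point u) (base_point v)"
  let ?m = "parallel_through L ?l z"
  have "?m \<in> directions"
    using parallel_through_z_direction[OF l(1,4)] .
  moreover have "direction_index ?m = i"
    using l(5) assms(2) by simp
  ultimately have m: "inv_into directions direction_index i = ?m"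
    using bij_betw_inv_into_left[OF bij_direction_index] by blast
  have "parallel ?l ?m"
    using parallel_sym[OF parallel_through(3)[OF l(1) z_in_P]] .
  then have "parallel_through L ?m p = ?l" if "p \<in> ?l" for p
    using parallel_through_eq[OF parallel_through(1)[OF l(1) z_in_P] l(1) that] by blast
  then show ?thesis
    unfolding class_line_def m using l(2,3) by simp
qed simp

lemma card_mono_component:
  assumes i: "i < q" and v: "v \<in> V"
  shows "card (mono_component V E colour i v) \<le> q * b + (q - 1) * c"
proof -
  let ?K = "class_line i (base_point v)"
  have "base_point v \<in> P"
    using v base_point_blow_up unfolding V_def by blast
  note K = class_line[OF i this]
  have "mono_component V E colour i v \<subseteq> {u \<in> V. class_line i (base_point u) = ?K}"
    by (rule mono_component_subset_level[where f = "\<lambda>u. class_line i (base_point u)"])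
      (rule class_line_edge)
  also have "\<dots> \<subseteq> {u \<in> V. base_point u \<in> ?K}"
  proof safe
    fix u assume "u \<in> V" "class_line i (base_point u) = ?K"
    moreover have "base_point u \<in> P"
      using \<open>u \<in> V\<close> base_point_blow_up unfolding V_def by blast
    ultimately show "base_point u \<in> ?K"
      using class_line(2)[OF i] by metis
  qed
  also have "\<dots> = blow_up weight ?K"
    using blow_up_restrict[of weight P ?K] line_subset[OF K(1)] unfolding V_def
    by (simp add: Int_absorb1)
  finally have "card (mono_component V E colour i v) \<le> card (blow_up weight ?K)"
    using card_mono[OF finite_blow_up[OF finite_line[OF K(1)]]] by blast
  also have "\<dots> = sum weight ?K"
    using card_blow_up[OF finite_line[OF K(1)]] .
  also have "\<dots> \<le> q * b + (q - 1) * c"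
    using sum_weight_not_parallel[OF K(1,3)] .
  finally show ?thesis .
qed

lemma mc_V: "mc q V E \<le> q * b + (q - 1) * c"
proof (rule mc_le_bound[OF edge_coloring_colour])
  show "V \<noteq> {}"
    using card_V order_ge_3 base_pos by auto
qed (use order_ge_3 card_mono_component in auto)

end

lemma exists_blow_up_graph:
  assumes "affine_plane q (P :: nat set) L" "q \<ge> 3" "(q - 1) * (q - 2) * c \<le> b" "0 < b"
  obtains V :: "nat set" and E where "simple_graph V E" "card V = q * (q - 1) * (b + c)"
    "min_degree V E + 1 + (q - 2) * (b + c) + c = card V" "mc q V E + c \<le> q * (b + c)"
proof -
  interpret finite_affine_plane q P L
    using assms(1,2) by unfold_locales auto
  obtain z Z D y g where "Z \<in> L" "D \<in> L" "Z \<noteq> D" "z \<in> Z" "z \<in> D" "y \<in> D" "g \<in> D"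
    "y \<noteq> z" "g \<noteq> z" "g \<noteq> y"
    by (rule two_lines_and_three_points[OF assms(2)])
  then interpret weighted_construction q P L Z D z y g b c
    using assms(2-4) by unfold_locales
  have "q * b + (q - 1) * c + c = q * (b + c)"
    using assms(2) by (cases q) (auto simp: algebra_simps)
  then have "mc q V E + c \<le> q * (b + c)"
    using mc_V by linarith
  moreover have "simple_graph V E"
    unfolding V_def E_def by (rule simple_graph_blow_up_complement[OF finite_points])
  ultimately show ?thesis
    using that card_V min_degree_V by blast
qed

lemma real_fractions_of_multiple:
  fixes r k :: nat
  assumes "r \<ge> 2"
  shows "(1 - real (r - 2) / real (r^2 - r)) * real (r * (r - 1) * k)
      = real (r * (r - 1) * k) - real (r - 2) * real k"
    and "real (r * (r - 1) * k) / real (r - 1) = real r * real k"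
proof -
  have "r^2 - r = r * (r - 1)"
    by (simp add: power2_eq_square diff_mult_distrib2)
  moreover have "real r \<noteq> 0" "real (r - 1) \<noteq> 0"
    using assms by auto
  ultimately have "real (r - 2) / real (r^2 - r) * real (r * (r - 1) * k) = real (r - 2) * real k"
    by simp
  then show "(1 - real (r - 2) / real (r^2 - r)) * real (r * (r - 1) * k)
      = real (r * (r - 1) * k) - real (r - 2) * real k"
    by (simp add: left_diff_distrib)
  show "real (r * (r - 1) * k) / real (r - 1) = real r * real k"
    using \<open>real (r - 1) \<noteq> 0\<close> by simp
qed

theorem theorem3p2:
  fixes n r c :: nat
  assumes "r \<ge> 3" and "c \<ge> 1"
    and "n \<ge> r * (r - 1) * ((r - 1) * (r - 2) + 1) * c"
    and "(r^2 - r) dvd n"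
    and "\<exists>(P :: nat set) L. affine_plane r P L"
  shows "\<exists>(V :: nat set) E. simple_graph V E \<and> card V = n \<and>
     real (min_degree V E) = (1 - real (r - 2) / real (r^2 - r)) * real n - real c - 1 \<and>
     real (mc r V E) \<le> real n / real (r - 1) - real c"
proof -
  obtain P :: "nat set" and L where plane: "affine_plane r P L"
    using assms(5) by blast
  have r_sq: "r^2 - r = r * (r - 1)"
    by (simp add: power2_eq_square diff_mult_distrib2)
  obtain k where n: "n = r * (r - 1) * k"
    using assms(4) unfolding r_sq by blast
  have "r * (r - 1) * (((r - 1) * (r - 2) + 1) * c) \<le> r * (r - 1) * k"
    using assms(3) unfolding n by (simp only: mult.assoc)
  moreover have "0 < r * (r - 1)"
    using assms(1) by simp
  ultimately have "((r - 1) * (r - 2) + 1) * c \<le> k"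
    using mult_le_cancel1 by blast
  define b where "b = k - c"
  then have k: "k = b + c" and base_large: "(r - 1) * (r - 2) * c \<le> b"
    using \<open>((r - 1) * (r - 2) + 1) * c \<le> k\<close> by (auto simp: add_mult_distrib)
  moreover have "0 < (r - 1) * (r - 2) * c"
    using assms(1,2) by simp
  ultimately have "0 < b"
    by linarith
  obtain V :: "nat set" and E where "simple_graph V E" "card V = n"
    and degree: "min_degree V E + 1 + (r - 2) * k + c = n" and mc: "mc r V E + c \<le> r * k"
    using exists_blow_up_graph[OF plane assms(1) base_large \<open>0 < b\<close>] unfolding n k by metis
  have "real (min_degree V E) = (1 - real (r - 2) / real (r^2 - r)) * real n - real c - 1"
    using real_fractions_of_multiple(1)[of r k, folded n] assms(1) unfolding degree[symmetric] by simp
  moreover have "real (mc r V E) \<le> real n / real (r - 1) - real c"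
    using real_fractions_of_multiple(2)[of r k, folded n] assms(1) mc
    by (simp add: of_nat_add[symmetric] of_nat_mult[symmetric] del: of_nat_add of_nat_mult)
  ultimately show ?thesis
    using \<open>simple_graph V E\<close> \<open>card V = n\<close> by blast
qed
end
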